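(* Let $(M,f,g)$ be an $(m,n)$-hypermodule over a commutative Krasner $(m,n)$-hyperring $(R,f',g')$ with scalar identity $1$, let $Q$ be a proper subhypermodule of $M$, and let $\phi:\mathcal{SH}(M)\to\mathcal{SH}(M)\cup\{\varnothing\}$ be a function such that $\phi(Q)$ is a subhypermodule of $M$ with $\phi(Q)\subseteq Q$. Then the following are equivalent: (1) $Q$ is an $n$-ary $\phi$-classical prime subhypermodule of $M$; (2) $Q/\phi(Q)$ is an $n$-ary weakly classical prime subhypermodule of $M/\phi(Q)$.
   Context: A commutative Krasner $(m,n)$-hyperring with scalar identity $1$ is a triple $(R,f',g')$ where $(R,f')$ is a canonical $m$-ary hypergroup with zero $0$, $(R,g')$ is a commutative $n$-ary semigroup, $g'$ is distributive over $f'$, $0$ is a zero element for $g'$, and $g'(x,1^{(n-1)})=x$. Notation: $x_i^j$ denotes $x_i,\dots,x_j$ and $x^{(k)}$ denotes $x$ repeated $k$ times. An $(m,n)$-hypermodule over $R$ is a triple $(M,f,g)$ with $(M,f)$ a canonical $m$-ary hypergroup with zero $0$ and $g:R^{n-1}\times M\to P^*(M)$ satisfying: $g(r_1^{n-1},f(x_1^m))=f(g(r_1^{n-1},x_1),\dots,g(r_1^{n-1},x_m))$; $g(r_1^{i-1},f'(s_1^m),r_{i+1}^{n-1},x)=f(g(r_1^{i-1},s_1,r_{i+1}^{n-1},x),\dots,g(r_1^{i-1},s_m,r_{i+1}^{n-1},x))$; $g(r_1^{i-1},g'(r_i^{i+n-1}),r_{i+n}^{2n-2},x)=g(r_1^{n-1},g(r_n^{2n-2},x))$;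 $g(r_1^{i-1},0,r_{i+1}^{n-1},x)=\{0\}$; moreover $g(1^{(n-1)},a)=\{a\}$. Operations on subsets are unions over elements. A subhypermodule is a nonempty $N\subseteq M$ with $(N,f)$ an $m$-ary subhypergroup and $g(R^{(n-1)},N)\subseteq N$; $\mathcal{SH}(M)$ is the set of subhypermodules of $M$. A proper subhypermodule $Q$ of $M$ is $n$-ary $\phi$-classical prime if $g(r_1^{n-1},a)\subseteq Q\setminus\phi(Q)$ ($r_i\in R$, $a\in M$) implies $g(r_i,1^{(n-2)},a)\subseteq Q$ for some $1\le i\le n-1$. A proper subhypermodule $Q$ of an $(m,n)$-hypermodule is $n$-ary weakly classical prime if $0\notin G(r_1^{n-1},x)\subseteq Q$ implies $G(r_i,1^{(n-2)},x)\subseteq Q$ for some $i$, where $G$ is the external operation and $0$ the zero. For a subhypermodule $N$, $M/N=\{f(a,N,0^{(m-2)}):a\in M\}$ is an $(m,n)$-hypermodule with $F(f(a_1,N,0^{(m-2)}),\dots,f(a_m,N,0^{(m-2)}))=\{f(t,N,0^{(m-2)}):t\in f(a_1^m)\}$ and $G(r_1^{n-1},f(a,N,0^{(m-2)}))=\{f(z,N,0^{(m-2)}):z\in g(r_1^{n-1},a)\}$, with zero $N$; for a subhypermodule $K\supseteq N$, $K/N=\{f(a,N,0^{(m-2)}):a\in K\}$. *)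

theory Defs
  imports Main "HOL-Library.Multiset"
begin

text \<open>n-ary operations are modelled on lists (of the appropriate length).
  A hyperoperation has values in sets; operations on subsets are unions over elements.\<close>

definition liftop :: "('a list \<Rightarrow> 'b set) \<Rightarrow> 'a set list \<Rightarrow> 'b set" where
  "liftop f Ss = \<Union>{f xs | xs. list_all2 (\<in>) xs Ss}"

definition sing :: "'a \<Rightarrow> 'a set" where
  "sing x = {x}"

definition m_ary_hypergroup :: "nat \<Rightarrow> 'a set \<Rightarrow> ('a list \<Rightarrow> 'a set) \<Rightarrow> bool" where
  "m_ary_hypergroup m H f \<longleftrightarrow>
     (\<forall>xs. length xs = m \<and> set xs \<subseteq> H \<longrightarrow> f xs \<noteq> {} \<and> f xs \<subseteq> H) \<and>
     (\<forall>xs i. length xs = 2*m - 1 \<and> set xs \<subseteq> H \<and> i < m \<longrightarrow>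
        liftop f (map sing (take i xs) @ [f (take m (drop i xs))] @ map sing (drop (i+m) xs))
        = liftop f ([f (take m xs)] @ map sing (drop m xs))) \<and>
     (\<forall>xs i. length xs = m \<and> set xs \<subseteq> H \<and> i < m \<longrightarrow>
        liftop f ((map sing xs)[i := H]) = H)"

definition hinv :: "nat \<Rightarrow> 'a set \<Rightarrow> ('a list \<Rightarrow> 'a set) \<Rightarrow> 'a \<Rightarrow> 'a \<Rightarrow> 'a" where
  "hinv m H f z x = (THE y. y \<in> H \<and> z \<in> f (x # y # replicate (m-2) z))"

definition canonical_hypergroup :: "nat \<Rightarrow> 'a set \<Rightarrow> ('a list \<Rightarrow> 'a set) \<Rightarrow> 'a \<Rightarrow> bool" where
  "canonical_hypergroup m H f z \<longleftrightarrow>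
     m \<ge> 2 \<and> m_ary_hypergroup m H f \<and>
     (\<forall>xs ys. length xs = m \<and> set xs \<subseteq> H \<and> mset ys = mset xs \<longrightarrow> f xs = f ys) \<and>
     z \<in> H \<and>
     (\<forall>x\<in>H. f (x # replicate (m-1) z) = {x}) \<and>
     (\<forall>e\<in>H. (\<forall>x\<in>H. f (x # replicate (m-1) e) = {x}) \<longrightarrow> e = z) \<and>
     (\<forall>x\<in>H. \<exists>!y. y \<in> H \<and> z \<in> f (x # y # replicate (m-2) z)) \<and>
     (\<forall>x xs i. length xs = m \<and> set xs \<subseteq> H \<and> x \<in> f xs \<and> i < m \<longrightarrow>
        xs ! i \<in> f (x # map (hinv m H f z) (take i xs @ drop (Suc i) xs)))"

definition comm_n_ary_semigroup :: "nat \<Rightarrow> 'r set \<Rightarrow> ('r list \<Rightarrow> 'r) \<Rightarrow> bool" where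
  "comm_n_ary_semigroup n R g \<longleftrightarrow>
     n \<ge> 2 \<and>
     (\<forall>xs. length xs = n \<and> set xs \<subseteq> R \<longrightarrow> g xs \<in> R) \<and>
     (\<forall>xs i. length xs = 2*n - 1 \<and> set xs \<subseteq> R \<and> i < n \<longrightarrow>
        g (take i xs @ [g (take n (drop i xs))] @ drop (i+n) xs) = g (g (take n xs) # drop n xs)) \<and>
     (\<forall>xs ys. length xs = n \<and> set xs \<subseteq> R \<and> mset ys = mset xs \<longrightarrow> g xs = g ys)"

definition krasner_hyperring ::
  "nat \<Rightarrow> nat \<Rightarrow> 'r set \<Rightarrow> ('r list \<Rightarrow> 'r set) \<Rightarrow> ('r list \<Rightarrow> 'r) \<Rightarrow> 'r \<Rightarrow> 'r \<Rightarrow> bool" where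
  "krasner_hyperring m n R f' g' zR one \<longleftrightarrow>
     canonical_hypergroup m R f' zR \<and> comm_n_ary_semigroup n R g' \<and>
     (\<forall>xs ys i. length xs = n \<and> set xs \<subseteq> R \<and> length ys = m \<and> set ys \<subseteq> R \<and> i < n \<longrightarrow>
        (\<lambda>y. g' (xs[i := y])) ` f' ys = f' (map (\<lambda>y. g' (xs[i := y])) ys)) \<and>
     (\<forall>xs i. length xs = n \<and> set xs \<subseteq> R \<and> i < n \<longrightarrow> g' (xs[i := zR]) = zR) \<and>
     one \<in> R \<and>
     (\<forall>x\<in>R. g' (x # replicate (n-1) one) = x)"

definition hypermodule ::
  "nat \<Rightarrow> nat \<Rightarrow> 'r set \<Rightarrow> ('r list \<Rightarrow> 'r set) \<Rightarrow> ('r list \<Rightarrow> 'r) \<Rightarrow> 'r \<Rightarrow> 'r \<Rightarrow>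
   'a set \<Rightarrow> ('a list \<Rightarrow> 'a set) \<Rightarrow> ('r list \<Rightarrow> 'a \<Rightarrow> 'a set) \<Rightarrow> 'a \<Rightarrow> bool" where
  "hypermodule m n R f' g' zR one M f g z \<longleftrightarrow>
     krasner_hyperring m n R f' g' zR one \<and>
     canonical_hypergroup m M f z \<and>
     (\<forall>rs x. length rs = n-1 \<and> set rs \<subseteq> R \<and> x \<in> M \<longrightarrow> g rs x \<noteq> {} \<and> g rs x \<subseteq> M) \<and>
     (\<forall>rs xs. length rs = n-1 \<and> set rs \<subseteq> R \<and> length xs = m \<and> set xs \<subseteq> M \<longrightarrow>
        \<Union>(g rs ` f xs) = liftop f (map (g rs) xs)) \<and>
     (\<forall>rs i ss x. length rs = n-1 \<and> set rs \<subseteq> R \<and> i < n-1 \<and> length ss = m \<and> set ss \<subseteq> R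
        \<and> x \<in> M \<longrightarrow>
        \<Union>((\<lambda>s. g (rs[i := s]) x) ` f' ss) = liftop f (map (\<lambda>s. g (rs[i := s]) x) ss)) \<and>
     (\<forall>rs i x. length rs = 2*n - 2 \<and> set rs \<subseteq> R \<and> i < n-1 \<and> x \<in> M \<longrightarrow>
        g (take i rs @ [g' (take n (drop i rs))] @ drop (i+n) rs) x
        = \<Union>(g (take (n-1) rs) ` g (drop (n-1) rs) x)) \<and>
     (\<forall>rs i x. length rs = n-1 \<and> set rs \<subseteq> R \<and> i < n-1 \<and> x \<in> M \<longrightarrow>
        g (rs[i := zR]) x = {z}) \<and>
     (\<forall>x\<in>M. g (replicate (n-1) one) x = {x})"

definition subhypermodule ::
  "nat \<Rightarrow> nat \<Rightarrow> 'r set \<Rightarrow> 'b set \<Rightarrow> ('b list \<Rightarrow> 'b set) \<Rightarrow> ('r list \<Rightarrow> 'b \<Rightarrow> 'b set) \<Rightarrow> 'b set \<Rightarrow> bool" where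
  "subhypermodule m n R M f g N \<longleftrightarrow>
     N \<noteq> {} \<and> N \<subseteq> M \<and> m_ary_hypergroup m N f \<and>
     (\<forall>rs x. length rs = n-1 \<and> set rs \<subseteq> R \<and> x \<in> N \<longrightarrow> g rs x \<subseteq> N)"

definition phi_classical_prime ::
  "nat \<Rightarrow> nat \<Rightarrow> 'r set \<Rightarrow> 'r \<Rightarrow> 'a set \<Rightarrow> ('a list \<Rightarrow> 'a set) \<Rightarrow> ('r list \<Rightarrow> 'a \<Rightarrow> 'a set)
   \<Rightarrow> ('a set \<Rightarrow> 'a set) \<Rightarrow> 'a set \<Rightarrow> bool" where
  "phi_classical_prime m n R one M f g \<phi> Q \<longleftrightarrow>
     subhypermodule m n R M f g Q \<and> Q \<noteq> M \<and>
     (\<forall>rs a. length rs = n-1 \<and> set rs \<subseteq> R \<and> a \<in> M \<and> g rs a \<subseteq> Q - \<phi> Q \<longrightarrow>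
        (\<exists>i<n-1. g (rs ! i # replicate (n-2) one) a \<subseteq> Q))"

definition weakly_classical_prime ::
  "nat \<Rightarrow> nat \<Rightarrow> 'r set \<Rightarrow> 'r \<Rightarrow> 'b set \<Rightarrow> ('b list \<Rightarrow> 'b set) \<Rightarrow> ('r list \<Rightarrow> 'b \<Rightarrow> 'b set)
   \<Rightarrow> 'b \<Rightarrow> 'b set \<Rightarrow> bool" where
  "weakly_classical_prime m n R one M f g z Q \<longleftrightarrow>
     subhypermodule m n R M f g Q \<and> Q \<noteq> M \<and>
     (\<forall>rs x. length rs = n-1 \<and> set rs \<subseteq> R \<and> x \<in> M \<and> z \<notin> g rs x \<and> g rs x \<subseteq> Q \<longrightarrow>
        (\<exists>i<n-1. g (rs ! i # replicate (n-2) one) x \<subseteq> Q))"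

definition coset :: "nat \<Rightarrow> ('a list \<Rightarrow> 'a set) \<Rightarrow> 'a \<Rightarrow> 'a set \<Rightarrow> 'a \<Rightarrow> 'a set" where
  "coset m f z N a = liftop f ([{a}, N] @ replicate (m-2) {z})"

definition qcarrier :: "nat \<Rightarrow> 'a set \<Rightarrow> ('a list \<Rightarrow> 'a set) \<Rightarrow> 'a \<Rightarrow> 'a set \<Rightarrow> 'a set set" where
  "qcarrier m M f z N = coset m f z N ` M"

definition qF :: "nat \<Rightarrow> 'a set \<Rightarrow> ('a list \<Rightarrow> 'a set) \<Rightarrow> 'a \<Rightarrow> 'a set \<Rightarrow> 'a set list \<Rightarrow> 'a set set" where
  "qF m M f z N Xs = {coset m f z N t | t as. length as = m \<and> set as \<subseteq> M \<and>
       map (coset m f z N) as = Xs \<and> t \<in> f as}"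

definition qG :: "nat \<Rightarrow> 'a set \<Rightarrow> ('a list \<Rightarrow> 'a set) \<Rightarrow> ('r list \<Rightarrow> 'a \<Rightarrow> 'a set) \<Rightarrow> 'a \<Rightarrow> 'a set
   \<Rightarrow> 'r list \<Rightarrow> 'a set \<Rightarrow> 'a set set" where
  "qG m M f g z N rs X = {coset m f z N y | y a. a \<in> M \<and> coset m f z N a = X \<and> y \<in> g rs a}"

definition qsub :: "nat \<Rightarrow> ('a list \<Rightarrow> 'a set) \<Rightarrow> 'a \<Rightarrow> 'a set \<Rightarrow> 'a set \<Rightarrow> 'a set set" where
  "qsub m f z N K = coset m f z N ` K"

end

(*
  Write N = \<phi>(Q) and [a] = f(a, N, 0, ..., 0) for the coset of a. Since N is a subhypermodule,
  the cosets are the classes of the relation "a \<in> b + \<nu> for some \<nu> \<in> N", so both hyperoperations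
  of M/N are computed on representatives: F([a_1], ..., [a_m]) = [f(a_1, ..., a_m)] and
  G(r_1, ..., r_(n-1), [a]) = [g(r_1, ..., r_(n-1), a)]. Because N \<subseteq> Q, a coset meets Q only if
  it lies in Q, whence G(r, [a]) \<subseteq> Q/N iff g(r, a) \<subseteq> Q; and the zero N of M/N lies in
  G(r, [a]) iff g(r, a) meets N. Hence g(r, a) \<subseteq> Q - \<phi>(Q) iff 0 \<notin> G(r, [a]) \<subseteq> Q/N, and the two
  prime conditions translate into each other elementwise.
*)
theory Submission
  imports Defs
begin

lemma list_all2_mem_map_sing: "list_all2 (\<in>) ws (map sing xs) \<longleftrightarrow> ws = xs"
  by (induction xs arbitrary: ws) (auto simp: sing_def list_all2_Cons2)

lemma list_all2_mem_sing_middle: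
  "list_all2 (\<in>) ws (map sing xs @ [S] @ map sing ys) \<longleftrightarrow> (\<exists>t\<in>S. ws = xs @ [t] @ ys)"
  by (auto simp: list_all2_append2 list_all2_mem_map_sing list_all2_Cons2)

lemma liftop_sing_middle:
  "liftop F (map sing xs @ [S] @ map sing ys) = (\<Union>t\<in>S. F (xs @ [t] @ ys))"
  unfolding liftop_def list_all2_mem_sing_middle by blast

lemma liftop_sing_first: "liftop F (S # map sing ys) = (\<Union>t\<in>S. F (t # ys))"
  using liftop_sing_middle[of F "[]" S ys] by simp

lemma map_sing_update:
  "i < length xs \<Longrightarrow> (map sing xs)[i := S] = map sing (take i xs) @ [S] @ map sing (drop (Suc i) xs)"
  by (simp add: upd_conv_take_nth_drop take_map drop_map)

lemma list_all2_mem_subset: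
  "list_all2 (\<in>) xs Ss \<Longrightarrow> \<forall>S\<in>set Ss. S \<subseteq> A \<Longrightarrow> set xs \<subseteq> A"
  by (induction rule: list_all2_induct) auto

section \<open>Cosets of a subhypergroup\<close>

locale coset_space =
  fixes m :: nat and M :: "'a set" and f :: "'a list \<Rightarrow> 'a set" and z :: 'a and N :: "'a set"
  assumes canonical: "canonical_hypergroup m M f z"
    and sub_subset: "N \<subseteq> M" and zero_mem_sub: "z \<in> N"
    and sub_hypergroup: "m_ary_hypergroup m N f"
begin

abbreviation cos :: "'a \<Rightarrow> 'a set" where "cos \<equiv> coset m f z N"
abbreviation plus2 :: "'a \<Rightarrow> 'a \<Rightarrow> 'a set" where "plus2 x y \<equiv> f (x # y # replicate (m - 2) z)"
abbreviation neg :: "'a \<Rightarrow> 'a" where "neg \<equiv> hinv m M f z"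

lemma m_eq_Suc_Suc: "m = Suc (Suc (m - 2))"
  using canonical unfolding canonical_hypergroup_def by linarith

lemma hyperop_closed: "length xs = m \<Longrightarrow> set xs \<subseteq> M \<Longrightarrow> f xs \<subseteq> M"
  using canonical unfolding canonical_hypergroup_def m_ary_hypergroup_def by (elim conjE) blast

lemma hyperop_assoc:
  "length xs = 2 * m - 1 \<Longrightarrow> set xs \<subseteq> M \<Longrightarrow> i < m \<Longrightarrow>
   liftop f (map sing (take i xs) @ [f (take m (drop i xs))] @ map sing (drop (i + m) xs))
   = liftop f ([f (take m xs)] @ map sing (drop m xs))"
  using canonical unfolding canonical_hypergroup_def m_ary_hypergroup_def by (elim conjE) blast

lemma hyperop_perm: "length xs = m \<Longrightarrow> set xs \<subseteq> M \<Longrightarrow> mset ys = mset xs \<Longrightarrow> f xs = f ys"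
  using canonical unfolding canonical_hypergroup_def by (elim conjE) blast

lemma zero_mem: "z \<in> M"
  using canonical unfolding canonical_hypergroup_def by (elim conjE) blast

lemma hyperop_zero: "x \<in> M \<Longrightarrow> f (x # replicate (m - 1) z) = {x}"
  using canonical unfolding canonical_hypergroup_def by (elim conjE) blast

lemma ex1_neg: "x \<in> M \<Longrightarrow> \<exists>!y. y \<in> M \<and> z \<in> plus2 x y"
  using canonical unfolding canonical_hypergroup_def by (elim conjE) blast

lemma hyperop_reversible:
  "length xs = m \<Longrightarrow> set xs \<subseteq> M \<Longrightarrow> x \<in> f xs \<Longrightarrow> i < m \<Longrightarrow>
   xs ! i \<in> f (x # map neg (take i xs @ drop (Suc i) xs))"
  using canonical unfolding canonical_hypergroup_def by (elim conjE) blast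

lemma sub_hyperop_closed: "length xs = m \<Longrightarrow> set xs \<subseteq> N \<Longrightarrow> f xs \<subseteq> N"
  using sub_hypergroup unfolding m_ary_hypergroup_def by blast

lemma sub_reproductive:
  "length xs = m \<Longrightarrow> set xs \<subseteq> N \<Longrightarrow> i < m \<Longrightarrow> liftop f ((map sing xs)[i := N]) = N"
  using sub_hypergroup unfolding m_ary_hypergroup_def by blast

lemma replicate_pred_m: "replicate (m - 1) a = a # replicate (m - 2) a"
  using m_eq_Suc_Suc by (metis diff_Suc_1 replicate_Suc)

lemma replicate_zero_subset: "set (replicate k z) \<subseteq> N" "set (replicate k z) \<subseteq> M"
  using zero_mem_sub zero_mem by auto

lemma plus2_zero: "x \<in> M \<Longrightarrow> plus2 x z = {x}"
  by (metis hyperop_zero replicate_pred_m)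

lemma coset_eq_UN: "cos x = (\<Union>\<nu>\<in>N. plus2 x \<nu>)"
  using liftop_sing_middle[of f "[x]" N "replicate (m - 2) z"]
  by (simp add: coset_def sing_def)

lemma mem_coset_self: "x \<in> M \<Longrightarrow> x \<in> cos x"
  using plus2_zero zero_mem_sub unfolding coset_eq_UN by blast

lemma coset_of_mem_sub: "x \<in> N \<Longrightarrow> cos x = N"
  using sub_reproductive[of "x # replicate (m - 1) z" 1, unfolded replicate_pred_m]
    m_eq_Suc_Suc zero_mem_sub replicate_zero_subset(1)
  by (simp add: coset_def sing_def)

text \<open>Associativity regroups \<open>(y + \<nu>) + \<nu>'\<close> as \<open>y + (\<nu> + \<nu>')\<close>, and \<open>\<nu> + \<nu>' \<subseteq> N\<close>.\<close>

lemma coset_subset_if_mem_plus2: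
  assumes y: "y \<in> M" and \<nu>: "\<nu> \<in> N" and x: "x \<in> plus2 y \<nu>"
  shows "cos x \<subseteq> cos y"
proof
  fix w assume "w \<in> cos x"
  then obtain \<nu>' where \<nu>': "\<nu>' \<in> N" and w: "w \<in> plus2 x \<nu>'"
    unfolding coset_eq_UN by blast
  define k where "k = m - 2"
  have m: "m = Suc (Suc k)" using m_eq_Suc_Suc k_def by simp
  have "w \<in> liftop f ([f (y # \<nu> # replicate k z)] @ map sing (\<nu>' # replicate k z))"
    unfolding append.simps liftop_sing_first using x w k_def by auto
  also have "\<dots> = liftop f (map sing [y] @ [f (\<nu> # replicate k z @ [\<nu>'])] @ map sing (replicate k z))"
    using hyperop_assoc[of "y # \<nu> # replicate k z @ \<nu>' # replicate k z" 1]
      m y \<nu> \<nu>' sub_subset replicate_zero_subset(2)[of k] by auto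
  finally obtain t where t: "t \<in> f (\<nu> # replicate k z @ [\<nu>'])" and wt: "w \<in> f (y # t # replicate k z)"
    unfolding liftop_sing_middle by auto
  have "t \<in> N"
    using t sub_hyperop_closed[of "\<nu> # replicate k z @ [\<nu>']"] m \<nu> \<nu>' replicate_zero_subset(1)[of k]
    by auto
  then show "w \<in> cos y" unfolding coset_eq_UN using wt k_def by auto
qed

lemma neg_unique: "x \<in> M \<Longrightarrow> y \<in> M \<Longrightarrow> z \<in> plus2 x y \<Longrightarrow> neg x = y"
  unfolding hinv_def by (rule the1_equality[OF ex1_neg]) auto

lemma neg_zero: "neg z = z"
  using neg_unique[OF zero_mem zero_mem] plus2_zero[OF zero_mem] by simp

lemma neg_mem_sub: assumes \<nu>: "\<nu> \<in> N" shows "neg \<nu> \<in> N"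
proof -
  have "z \<in> cos \<nu>" using coset_of_mem_sub[OF \<nu>] zero_mem_sub by simp
  then obtain \<nu>' where "\<nu>' \<in> N" "z \<in> plus2 \<nu> \<nu>'" unfolding coset_eq_UN by blast
  then show ?thesis using neg_unique[of \<nu> \<nu>'] \<nu> sub_subset by auto
qed

lemma mem_plus2_neg:
  assumes "y \<in> M" and "\<nu> \<in> N" and "x \<in> plus2 y \<nu>"
  shows "y \<in> plus2 x (neg \<nu>)"
  using hyperop_reversible[of "y # \<nu> # replicate (m - 2) z" x 0] assms sub_subset
    replicate_zero_subset(2) m_eq_Suc_Suc
  by (auto simp: neg_zero)

lemma coset_eq_iff:
  assumes x: "x \<in> M" and y: "y \<in> M"
  shows "cos x = cos y \<longleftrightarrow> (\<exists>\<nu>\<in>N. x \<in> plus2 y \<nu>)"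
proof
  assume "cos x = cos y"
  then show "\<exists>\<nu>\<in>N. x \<in> plus2 y \<nu>" using mem_coset_self[OF x] unfolding coset_eq_UN by auto
next
  assume "\<exists>\<nu>\<in>N. x \<in> plus2 y \<nu>"
  then obtain \<nu> where \<nu>: "\<nu> \<in> N" and xy: "x \<in> plus2 y \<nu>" by blast
  show "cos x = cos y"
    using coset_subset_if_mem_plus2[OF y \<nu> xy]
      coset_subset_if_mem_plus2[OF x neg_mem_sub[OF \<nu>] mem_plus2_neg[OF y \<nu> xy]]
    by blast
qed

text \<open>If \<open>a \<in> b + \<nu>\<close>, associativity gives \<open>f (a # ys) \<subseteq> \<nu> + f (b # ys)\<close>.\<close>

lemma hyperop_coset_cong_head:
  assumes a: "a \<in> M" and b: "b \<in> M" and ab: "cos a = cos b"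
    and ys: "set ys \<subseteq> M" "length ys = m - 1" and u: "u \<in> f (a # ys)"
  shows "\<exists>u'\<in>f (b # ys). cos u = cos u'"
proof -
  obtain \<nu> where \<nu>: "\<nu> \<in> N" and a_\<nu>: "a \<in> plus2 b \<nu>" using coset_eq_iff[OF a b] ab by blast
  define k where "k = m - 2"
  have m: "m = Suc (Suc k)" using m_eq_Suc_Suc k_def by simp
  have \<nu>M: "\<nu> \<in> M" using \<nu> sub_subset by auto
  have swap: "f (\<nu> # replicate k z @ [x]) = plus2 x \<nu>" if "x \<in> M" for x
    by (rule hyperop_perm) (use m that \<nu>M replicate_zero_subset(2)[of k] k_def in auto)
  have "u \<in> liftop f ([f (\<nu> # replicate k z @ [b])] @ map sing ys)"
    unfolding append.simps liftop_sing_first swap[OF b] using a_\<nu> u by auto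
  also have "\<dots> = liftop f (map sing (\<nu> # replicate k z) @ [f (b # ys)] @ map sing [])"
    using hyperop_assoc[of "\<nu> # replicate k z @ b # ys" "Suc k"] m b \<nu>M
      replicate_zero_subset(2)[of k] ys by simp
  finally obtain u' where u': "u' \<in> f (b # ys)" and u_u': "u \<in> f (\<nu> # replicate k z @ [u'])"
    unfolding liftop_sing_middle by auto
  have u'M: "u' \<in> M" using hyperop_closed[of "b # ys"] u' b ys m by auto
  have uM: "u \<in> M" using hyperop_closed[of "a # ys"] u a ys m by auto
  have "cos u = cos u'" using coset_eq_iff[OF uM u'M] \<nu> u_u' swap[OF u'M] by auto
  then show ?thesis using u' by blast
qed

lemma hyperop_coset_cong_at:
  assumes a: "a \<in> M" and b: "b \<in> M" and ab: "cos a = cos b"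
    and "set pre \<subseteq> M" "set post \<subseteq> M" "length (pre @ a # post) = m"
    and u: "u \<in> f (pre @ a # post)"
  shows "\<exists>u'\<in>f (pre @ b # post). cos u = cos u'"
proof -
  have "f (pre @ x # post) = f (x # pre @ post)" if "x \<in> M" for x
    by (rule hyperop_perm) (use assms that in auto)
  then show ?thesis
    using hyperop_coset_cong_head[OF a b ab, of "pre @ post" u] assms by auto
qed

lemma hyperop_coset_cong_infix:
  "length as = length bs \<Longrightarrow> set pre \<subseteq> M \<Longrightarrow> set post \<subseteq> M \<Longrightarrow> set as \<subseteq> M \<Longrightarrow>
   set bs \<subseteq> M \<Longrightarrow> length (pre @ as @ post) = m \<Longrightarrow> map cos as = map cos bs \<Longrightarrow>
   u \<in> f (pre @ as @ post) \<Longrightarrow> \<exists>u'\<in>f (pre @ bs @ post). cos u = cos u'"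
proof (induction as bs arbitrary: pre u rule: list_induct2)
  case Nil
  then show ?case by auto
next
  case (Cons a as b bs)
  obtain u1 where u1: "u1 \<in> f ((pre @ [b]) @ as @ post)" and "cos u = cos u1"
    using hyperop_coset_cong_at[of a b pre "as @ post" u] Cons.prems by auto
  moreover obtain u' where "u' \<in> f ((pre @ [b]) @ bs @ post)" and "cos u1 = cos u'"
    using Cons.IH[of "pre @ [b]" u1] Cons.prems u1 by auto
  ultimately show ?case by auto
qed

lemma hyperop_coset_cong:
  "length as = m \<Longrightarrow> length bs = m \<Longrightarrow> set as \<subseteq> M \<Longrightarrow> set bs \<subseteq> M \<Longrightarrow>
   map cos as = map cos bs \<Longrightarrow> u \<in> f as \<Longrightarrow> \<exists>u'\<in>f bs. cos u = cos u'"
  using hyperop_coset_cong_infix[of as bs "[]" "[]" u] by simp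

lemma qF_map_coset:
  assumes "length as = m" and "set as \<subseteq> M"
  shows "qF m M f z N (map cos as) = cos ` f as"
proof
  show "cos ` f as \<subseteq> qF m M f z N (map cos as)" unfolding qF_def using assms by blast
  show "qF m M f z N (map cos as) \<subseteq> cos ` f as"
  proof
    fix X assume "X \<in> qF m M f z N (map cos as)"
    then obtain t bs where "X = cos t" "length bs = m" "set bs \<subseteq> M" "map cos bs = map cos as"
      "t \<in> f bs"
      unfolding qF_def by blast
    then show "X \<in> cos ` f as" using hyperop_coset_cong[of bs as t] assms by force
  qed
qed

lemma liftop_qF_sing_middle:
  assumes "length xs + length ys = m - 1" and "set xs \<subseteq> M" "set ys \<subseteq> M" "S \<subseteq> M"
  shows "liftop (qF m M f z N) (map sing (map cos xs) @ [cos ` S] @ map sing (map cos ys))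
    = cos ` liftop f (map sing xs @ [S] @ map sing ys)"
proof -
  have "liftop (qF m M f z N) (map sing (map cos xs) @ [cos ` S] @ map sing (map cos ys))
      = (\<Union>t\<in>S. qF m M f z N (map cos (xs @ [t] @ ys)))"
    unfolding liftop_sing_middle by simp
  also have "\<dots> = (\<Union>t\<in>S. cos ` f (xs @ [t] @ ys))"
    by (intro SUP_cong refl qF_map_coset) (use assms m_eq_Suc_Suc in auto)
  finally show ?thesis by (simp only: liftop_sing_middle image_UN)
qed

lemma lists_coset_image:
  assumes "set Xs \<subseteq> cos ` Q"
  obtains qs where "set qs \<subseteq> Q" and "Xs = map cos qs"
proof -
  have "Xs \<in> map cos ` lists Q" using assms lists_image[of cos Q] by auto
  then show ?thesis using that by auto
qed

lemma m_ary_hypergroup_quotient: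
  assumes QM: "Q \<subseteq> M" and Q: "m_ary_hypergroup m Q f"
  shows "m_ary_hypergroup m (cos ` Q) (qF m M f z N)"
  unfolding m_ary_hypergroup_def
proof (intro conjI allI impI)
  fix Xs assume Xs: "length Xs = m \<and> set Xs \<subseteq> cos ` Q"
  then obtain qs where qs: "set qs \<subseteq> Q" "Xs = map cos qs" using lists_coset_image[of Xs Q] by blast
  then have "qF m M f z N Xs = cos ` f qs" "f qs \<noteq> {}" "f qs \<subseteq> Q"
    using qF_map_coset Xs QM Q unfolding m_ary_hypergroup_def by auto
  then show "qF m M f z N Xs \<noteq> {}" "qF m M f z N Xs \<subseteq> cos ` Q" by auto
next
  fix Xs i assume Xs: "length Xs = 2 * m - 1 \<and> set Xs \<subseteq> cos ` Q \<and> i < m"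
  then obtain qs where qs: "set qs \<subseteq> Q" "Xs = map cos qs" using lists_coset_image[of Xs Q] by blast
  have qsM: "set qs \<subseteq> M" using qs QM by auto
  have side: "liftop (qF m M f z N) (map sing (take j Xs) @ [qF m M f z N (take m (drop j Xs))]
        @ map sing (drop (j + m) Xs))
      = cos ` liftop f (map sing (take j qs) @ [f (take m (drop j qs))] @ map sing (drop (j + m) qs))"
    if "j < m" for j
  proof -
    have "set (take m (drop j qs)) \<subseteq> M" "set (take j qs) \<subseteq> M" "set (drop (j + m) qs) \<subseteq> M"
      using qsM by (meson order.trans set_drop_subset set_take_subset)+
    moreover have "length (take m (drop j qs)) = m"
      using Xs qs that by simp
    ultimately show ?thesis
      using liftop_qF_sing_middle[of "take j qs" "drop (j + m) qs" "f (take m (drop j qs))"]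
        qF_map_coset[of "take m (drop j qs)"] hyperop_closed[of "take m (drop j qs)"] Xs qs that
      by (simp add: take_map drop_map)
  qed
  show "liftop (qF m M f z N) (map sing (take i Xs) @ [qF m M f z N (take m (drop i Xs))]
      @ map sing (drop (i + m) Xs))
    = liftop (qF m M f z N) ([qF m M f z N (take m Xs)] @ map sing (drop m Xs))"
    using side[of i] side[of 0] hyperop_assoc[of qs i] Xs qs qsM m_eq_Suc_Suc by simp
next
  fix Xs i assume Xs: "length Xs = m \<and> set Xs \<subseteq> cos ` Q \<and> i < m"
  then obtain qs where qs: "set qs \<subseteq> Q" "Xs = map cos qs" using lists_coset_image[of Xs Q] by blast
  have i: "i < length qs" and i': "i < length (map cos qs)" using Xs qs by simp_all
  have "liftop (qF m M f z N) ((map sing Xs)[i := cos ` Q]) = cos ` liftop f ((map sing qs)[i := Q])"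
    unfolding qs(2) map_sing_update[OF i] map_sing_update[OF i'] take_map drop_map
    by (rule liftop_qF_sing_middle)
      (use i qs Xs QM in \<open>auto dest: in_set_takeD in_set_dropD\<close>)
  also have "\<dots> = cos ` Q" using Q Xs qs unfolding m_ary_hypergroup_def by auto
  finally show "liftop (qF m M f z N) ((map sing Xs)[i := cos ` Q]) = cos ` Q" .
qed

lemma mem_of_coset_eq:
  assumes QM: "Q \<subseteq> M" and NQ: "N \<subseteq> Q" and Q: "m_ary_hypergroup m Q f"
    and x: "x \<in> M" and q: "q \<in> Q" and xq: "cos x = cos q"
  shows "x \<in> Q"
proof -
  obtain \<nu> where \<nu>: "\<nu> \<in> N" and x\<nu>: "x \<in> plus2 q \<nu>" using coset_eq_iff[OF x, of q] q QM xq by auto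
  have "set (q # \<nu> # replicate (m - 2) z) \<subseteq> Q" using q \<nu> NQ zero_mem_sub by auto
  then show ?thesis
    using x\<nu> Q m_eq_Suc_Suc unfolding m_ary_hypergroup_def by (metis length_Cons length_replicate subsetD)
qed

lemma coset_image_subset_iff:
  assumes "Q \<subseteq> M" and "N \<subseteq> Q" and "m_ary_hypergroup m Q f" and "S \<subseteq> M"
  shows "cos ` S \<subseteq> cos ` Q \<longleftrightarrow> S \<subseteq> Q"
  using mem_of_coset_eq[OF assms(1-3)] assms(4) by (auto 0 3)

lemma sub_mem_coset_image_iff: "S \<subseteq> M \<Longrightarrow> N \<in> cos ` S \<longleftrightarrow> S \<inter> N \<noteq> {}"
  using mem_coset_self coset_of_mem_sub by blast

end

section \<open>Quotient hypermodules\<close>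

locale krasner_hypermodule =
  fixes m n :: nat and R :: "'r set" and f' :: "'r list \<Rightarrow> 'r set" and g' :: "'r list \<Rightarrow> 'r"
    and zR one :: 'r and M :: "'a set" and f :: "'a list \<Rightarrow> 'a set"
    and g :: "'r list \<Rightarrow> 'a \<Rightarrow> 'a set" and z :: 'a
  assumes hypermodule: "hypermodule m n R f' g' zR one M f g z"
begin

lemma canonical_module: "canonical_hypergroup m M f z"
  using hypermodule unfolding hypermodule_def by (elim conjE) assumption

lemma n_ge_2: "2 \<le> n"
  using hypermodule unfolding hypermodule_def krasner_hyperring_def comm_n_ary_semigroup_def
  by (elim conjE) assumption

lemma zero_scalar_mem: "zR \<in> R"
  using hypermodule unfolding hypermodule_def krasner_hyperring_def canonical_hypergroup_def
  by (elim conjE) assumption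

lemma one_mem: "one \<in> R"
  using hypermodule unfolding hypermodule_def krasner_hyperring_def by (elim conjE) assumption

lemma scalar_closed: "length rs = n - 1 \<Longrightarrow> set rs \<subseteq> R \<Longrightarrow> x \<in> M \<Longrightarrow> g rs x \<subseteq> M"
  using hypermodule unfolding hypermodule_def by (elim conjE) blast

lemma scalar_distrib:
  assumes "length rs = n - 1" "set rs \<subseteq> R" "length xs = m" "set xs \<subseteq> M"
  shows "\<Union>(g rs ` f xs) = liftop f (map (g rs) xs)"
proof -
  have "\<forall>rs xs. length rs = n - 1 \<and> set rs \<subseteq> R \<and> length xs = m \<and> set xs \<subseteq> M \<longrightarrow>
      \<Union>(g rs ` f xs) = liftop f (map (g rs) xs)"
    using hypermodule unfolding hypermodule_def by (elim conjE) assumption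
  then show ?thesis using assms by metis
qed

lemma scalar_zero:
  assumes "length rs = n - 1" "set rs \<subseteq> R" "i < n - 1" "x \<in> M"
  shows "g (rs[i := zR]) x = {z}"
proof -
  have "\<forall>rs i x. length rs = n - 1 \<and> set rs \<subseteq> R \<and> i < n - 1 \<and> x \<in> M \<longrightarrow>
      g (rs[i := zR]) x = {z}"
    using hypermodule unfolding hypermodule_def by (elim conjE) assumption
  then show ?thesis using assms by metis
qed

lemma zero_mem_subhypermodule:
  assumes N: "subhypermodule m n R M f g N"
  shows "z \<in> N"
proof -
  obtain x where x: "x \<in> N" and xM: "x \<in> M" using N unfolding subhypermodule_def by blast
  let ?zeros = "replicate (n - 1) zR"
  have "g (?zeros[0 := zR]) x = {z}" using scalar_zero[of ?zeros 0 x] n_ge_2 zero_scalar_mem xM by auto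
  moreover have "g ?zeros x \<subseteq> N" using N x n_ge_2 zero_scalar_mem unfolding subhypermodule_def by auto
  moreover have "?zeros[0 := zR] = ?zeros" using n_ge_2 zero_scalar_mem by (simp add: list_update_same_conv)
  ultimately show ?thesis by auto
qed

end

locale hypermodule_quotient = krasner_hypermodule +
  fixes N :: "'a set"
  assumes sub: "subhypermodule m n R M f g N"

sublocale hypermodule_quotient \<subseteq> coset_space m M f z N
  using canonical_module sub zero_mem_subhypermodule[OF sub]
  by unfold_locales (auto simp: subhypermodule_def)

context hypermodule_quotient
begin

text \<open>If \<open>a' \<in> a + \<nu>\<close>, distributivity gives \<open>g rs a' \<subseteq> f (g rs a # g rs \<nu> # \<dots>)\<close>, and all
  summands except the first lie in \<open>N\<close>, so they do not change the coset.\<close>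

lemma qG_coset:
  assumes rs: "length rs = n - 1" "set rs \<subseteq> R" and a: "a \<in> M"
  shows "qG m M f g z N rs (cos a) = cos ` g rs a"
proof
  show "cos ` g rs a \<subseteq> qG m M f g z N rs (cos a)" unfolding qG_def using a by blast
  show "qG m M f g z N rs (cos a) \<subseteq> cos ` g rs a"
  proof
    fix X assume "X \<in> qG m M f g z N rs (cos a)"
    then obtain y a' where X: "X = cos y" and a': "a' \<in> M" "cos a' = cos a" and y: "y \<in> g rs a'"
      unfolding qG_def by blast
    obtain \<nu> where \<nu>: "\<nu> \<in> N" and a'_\<nu>: "a' \<in> plus2 a \<nu>"
      using coset_eq_iff[OF a'(1) a] a'(2) by blast
    let ?xs = "a # \<nu> # replicate (m - 2) z"
    have xs: "length ?xs = m" "set ?xs \<subseteq> M"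
      using m_eq_Suc_Suc a \<nu> sub_subset replicate_zero_subset(2) by (simp_all, blast)
    have "y \<in> \<Union>(g rs ` f ?xs)" using y a'_\<nu> by auto
    then obtain ws where ws: "list_all2 (\<in>) ws (map (g rs) ?xs)" and y_ws: "y \<in> f ws"
      unfolding scalar_distrib[OF rs xs] liftop_def by auto
    then obtain w ws' where ws_eq: "ws = w # ws'" and w: "w \<in> g rs a"
      and ws': "list_all2 (\<in>) ws' (map (g rs) (\<nu> # replicate (m - 2) z))"
      by (auto simp: list_all2_Cons2)
    have ws'N: "set ws' \<subseteq> N"
      using list_all2_mem_subset[OF ws'] sub rs \<nu> zero_mem_sub unfolding subhypermodule_def by auto
    have len: "length ws' = m - 1" using list_all2_lengthD[OF ws'] m_eq_Suc_Suc by simp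
    have wM: "w \<in> M" using scalar_closed[OF rs a] w by auto
    have "map cos ws' = map (\<lambda>_. N) ws'"
      using ws'N coset_of_mem_sub by (intro map_cong) auto
    then have "map cos ws' = map cos (replicate (m - 1) z)"
      using len coset_of_mem_sub[OF zero_mem_sub] by (simp add: map_replicate_const)
    then have "\<exists>u\<in>f (w # replicate (m - 1) z). cos y = cos u"
      by (intro hyperop_coset_cong[of "w # ws'"])
        (use y_ws ws_eq ws'N len wM sub_subset zero_mem m_eq_Suc_Suc in auto)
    then show "X \<in> cos ` g rs a" using X w hyperop_zero[OF wM] by auto
  qed
qed

lemma subhypermodule_quotient:
  assumes Q: "subhypermodule m n R M f g Q" and NQ: "N \<subseteq> Q"
  shows "subhypermodule m n R (cos ` M) (qF m M f z N) (qG m M f g z N) (cos ` Q)"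
  unfolding subhypermodule_def
proof (intro conjI allI impI)
  have QM: "Q \<subseteq> M" and Q_closed: "\<And>rs q. length rs = n - 1 \<Longrightarrow> set rs \<subseteq> R \<Longrightarrow> q \<in> Q \<Longrightarrow> g rs q \<subseteq> Q"
    using Q unfolding subhypermodule_def by auto
  show "cos ` Q \<noteq> {}" "cos ` Q \<subseteq> cos ` M" using Q unfolding subhypermodule_def by auto
  show "m_ary_hypergroup m (cos ` Q) (qF m M f z N)"
    using Q m_ary_hypergroup_quotient unfolding subhypermodule_def by blast
  fix rs X assume rs_X: "length rs = n - 1 \<and> set rs \<subseteq> R \<and> X \<in> cos ` Q"
  then obtain q where q: "q \<in> Q" "X = cos q" by blast
  then have "qG m M f g z N rs X = cos ` g rs q" using qG_coset rs_X QM by auto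
  then show "qG m M f g z N rs X \<subseteq> cos ` Q" using Q_closed[of rs q] rs_X q by (simp add: image_mono)
qed

lemma quotient_prime_condition_iff:
  assumes Q: "subhypermodule m n R M f g Q" and NQ: "N \<subseteq> Q"
  shows "(\<forall>rs a. length rs = n - 1 \<and> set rs \<subseteq> R \<and> a \<in> M \<and> g rs a \<subseteq> Q - N \<longrightarrow>
            (\<exists>i<n - 1. g (rs ! i # replicate (n - 2) one) a \<subseteq> Q))
    \<longleftrightarrow> (\<forall>rs X. length rs = n - 1 \<and> set rs \<subseteq> R \<and> X \<in> cos ` M \<and>
            N \<notin> qG m M f g z N rs X \<and> qG m M f g z N rs X \<subseteq> cos ` Q \<longrightarrow>
            (\<exists>i<n - 1. qG m M f g z N (rs ! i # replicate (n - 2) one) X \<subseteq> cos ` Q))"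
    (is "(\<forall>rs a. ?P rs a) \<longleftrightarrow> (\<forall>rs X. ?P' rs X)")
proof -
  have QM: "Q \<subseteq> M" and Q_hypergroup: "m_ary_hypergroup m Q f"
    using Q unfolding subhypermodule_def by auto
  have in_Q: "qG m M f g z N rs (cos a) \<subseteq> cos ` Q \<longleftrightarrow> g rs a \<subseteq> Q"
    and avoids_zero: "N \<notin> qG m M f g z N rs (cos a) \<longleftrightarrow> g rs a \<inter> N = {}"
    if "length rs = n - 1" "set rs \<subseteq> R" "a \<in> M" for rs a
  proof -
    have "g rs a \<subseteq> M" using scalar_closed that by blast
    then show "qG m M f g z N rs (cos a) \<subseteq> cos ` Q \<longleftrightarrow> g rs a \<subseteq> Q"
      and "N \<notin> qG m M f g z N rs (cos a) \<longleftrightarrow> g rs a \<inter> N = {}"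
      unfolding qG_coset[OF that]
      using coset_image_subset_iff[OF QM NQ Q_hypergroup] sub_mem_coset_image_iff by simp_all
  qed
  have unit_scalars: "length (rs ! i # replicate (n - 2) one) = n - 1"
    "set (rs ! i # replicate (n - 2) one) \<subseteq> R"
    if "length rs = n - 1" "set rs \<subseteq> R" "i < n - 1" for rs i
    using that n_ge_2 one_mem by auto
  have pointwise: "?P rs a \<longleftrightarrow> ?P' rs (cos a)" if "a \<in> M" for rs a
  proof (cases "length rs = n - 1 \<and> set rs \<subseteq> R")
    case True
    then show ?thesis
      using that in_Q[of rs a] avoids_zero[of rs a] in_Q[OF unit_scalars[of rs] that] by auto
  qed (use that in auto)
  show ?thesis
  proof (intro iffI allI)
    fix rs X assume "\<forall>rs a. ?P rs a"
    then show "?P' rs X" using pointwise by (cases "X \<in> cos ` M") auto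
  next
    fix rs a assume "\<forall>rs X. ?P' rs X"
    then show "?P rs a" using pointwise by (cases "a \<in> M") auto
  qed
qed

end

theorem mainTheorem12:
  fixes R :: "'r set" and f' :: "'r list \<Rightarrow> 'r set" and g' :: "'r list \<Rightarrow> 'r"
    and zR one :: 'r
    and M :: "'a set" and f :: "'a list \<Rightarrow> 'a set" and g :: "'r list \<Rightarrow> 'a \<Rightarrow> 'a set"
    and z :: 'a and Q :: "'a set" and \<phi> :: "'a set \<Rightarrow> 'a set"
  assumes hm: "hypermodule m n R f' g' zR one M f g z"
    and Qsub: "subhypermodule m n R M f g Q" and Qprop: "Q \<noteq> M"
    and phi_range: "\<forall>N. subhypermodule m n R M f g N \<longrightarrow>
                       \<phi> N = {} \<or> subhypermodule m n R M f g (\<phi> N)"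
    and phiQ: "subhypermodule m n R M f g (\<phi> Q)" and phiQ_le: "\<phi> Q \<subseteq> Q"
  shows "phi_classical_prime m n R one M f g \<phi> Q \<longleftrightarrow>
         weakly_classical_prime m n R one
           (qcarrier m M f z (\<phi> Q)) (qF m M f z (\<phi> Q)) (qG m M f g z (\<phi> Q))
           (\<phi> Q) (qsub m f z (\<phi> Q) Q)"
proof -
  \<comment> \<open>Only the value \<open>\<phi> Q\<close> matters, so \<open>phi_range\<close> is not needed.\<close>
  interpret hypermodule_quotient m n R f' g' zR one M f g z "\<phi> Q"
    by unfold_locales (fact hm, fact phiQ)
  have QM: "Q \<subseteq> M" and Q_hypergroup: "m_ary_hypergroup m Q f"
    using Qsub unfolding subhypermodule_def by auto
  have "cos ` Q \<noteq> cos ` M"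
    using coset_image_subset_iff[OF QM phiQ_le Q_hypergroup subset_refl] QM Qprop by auto
  then show ?thesis
    unfolding phi_classical_prime_def weakly_classical_prime_def qcarrier_def qsub_def
    using Qsub Qprop subhypermodule_quotient[OF Qsub phiQ_le]
      quotient_prime_condition_iff[OF Qsub phiQ_le]
    by argo
qed

end
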